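(* Let $A,F_1,\dots,F_k,B$ be a sequence of faces of $\mathcal{C}$, all of the same dimension, such that each face opposes the next one. Then the categories $e_ARe_A\text{-mod}$ and $e_BRe_B\text{-mod}$ of finite-dimensional modules are equivalent.
   Context: Let $\mathcal{H}$ be a finite arrangement of linear hyperplanes in $\mathbb{R}^n$, each $H$ cut out by a fixed real linear form $f_H$, with sign vectors $\sigma(x)\in\{+,-,0\}^{\mathcal{H}}$. Faces are classes of points with equal sign vector; $\mathcal{C}$ is the set of faces, ordered by $C'\le C$ iff $C'\subseteq\overline{C}$. Two faces $A,B$ of equal dimension $d\ge1$ oppose each other if they have the same linear span and there is a face $C$ of dimension $d-1$, $C\le A$, $C\le B$, with $\sigma(A)_H=-\sigma(B)_H$ for every $H$ with $\sigma(C)_H=0$. $A,B,C$ are collinear if a line segment meets $A,B,C$ in that order. $R$ is the $\mathbb{C}$-algebra generated by $e_C$ ($C\in\mathcal{C}$) with relations $e_C^2=e_C$; $e_Ae_C=e_Ae_Be_C$ for collinear $A,B,C$; $e_Ae_B=e_B=e_Be_A$ for $A\le B$; localised by inverting all $e_Ae_Be_A+(1-e_A)$ with $A,B$ opposing. *)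

theory Defs
  imports "HOL-Analysis.Analysis" "Jordan_Normal_Form.Matrix"
begin

text \<open>The arrangement is indexed by a finite set H; hyperplane h is cut out by the
  linear form x \<mapsto> f h \<bullet> x.  Sign vectors take values in {-1,0,1} (via sgn);
  outside H they are 0.  A face is identified with its sign vector.\<close>

definition sigma :: "'h set \<Rightarrow> ('h \<Rightarrow> real^'n) \<Rightarrow> real^'n \<Rightarrow> ('h \<Rightarrow> real)" where
  "sigma H f x = (\<lambda>h. if h \<in> H then sgn (f h \<bullet> x) else 0)"

definition faces :: "'h set \<Rightarrow> ('h \<Rightarrow> real^'n) \<Rightarrow> ('h \<Rightarrow> real) set" where
  "faces H f = range (sigma H f)"

definition faceset :: "'h set \<Rightarrow> ('h \<Rightarrow> real^'n) \<Rightarrow> ('h \<Rightarrow> real) \<Rightarrow> (real^'n) set" where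
  "faceset H f s = {x. sigma H f x = s}"

definition face_dim :: "'h set \<Rightarrow> ('h \<Rightarrow> real^'n) \<Rightarrow> ('h \<Rightarrow> real) \<Rightarrow> nat" where
  "face_dim H f s = dim (faceset H f s)"

definition face_le :: "'h set \<Rightarrow> ('h \<Rightarrow> real^'n) \<Rightarrow> ('h \<Rightarrow> real) \<Rightarrow> ('h \<Rightarrow> real) \<Rightarrow> bool" where
  "face_le H f C' C \<longleftrightarrow> faceset H f C' \<subseteq> closure (faceset H f C)"

definition opposes :: "'h set \<Rightarrow> ('h \<Rightarrow> real^'n) \<Rightarrow> ('h \<Rightarrow> real) \<Rightarrow> ('h \<Rightarrow> real) \<Rightarrow> bool" where
  "opposes H f A B \<longleftrightarrow>
     A \<in> faces H f \<and> B \<in> faces H f \<and>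
     face_dim H f A = face_dim H f B \<and> face_dim H f A \<ge> 1 \<and>
     span (faceset H f A) = span (faceset H f B) \<and>
     (\<exists>C \<in> faces H f. face_dim H f C = face_dim H f A - 1 \<and>
        face_le H f C A \<and> face_le H f C B \<and>
        (\<forall>h\<in>H. C h = 0 \<longrightarrow> A h = - B h))"

definition collinear_faces :: "'h set \<Rightarrow> ('h \<Rightarrow> real^'n) \<Rightarrow> ('h \<Rightarrow> real) \<Rightarrow> ('h \<Rightarrow> real) \<Rightarrow> ('h \<Rightarrow> real) \<Rightarrow> bool" where
  "collinear_faces H f A B C \<longleftrightarrow>
     (\<exists>a\<in>faceset H f A. \<exists>b\<in>faceset H f B. \<exists>c\<in>faceset H f C. b \<in> closed_segment a c)"

text \<open>R is the quotient of the free complex algebra on generators e_C (C a face) and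
  t_{A,B} (A,B opposing; t_{A,B} is the adjoined inverse of e_A e_B e_A + (1 - e_A),
  i.e. Cohn's universal localisation) by the two-sided ideal generated by the relations
  below.  Elements of the free algebra are written as formal linear combinations of
  words, i.e. lists of (coefficient, word) pairs; the empty word is the unit 1.\<close>

datatype 'h gen = GenE "'h \<Rightarrow> real" | GenT "'h \<Rightarrow> real" "'h \<Rightarrow> real"

definition R_gens :: "'h set \<Rightarrow> ('h \<Rightarrow> real^'n) \<Rightarrow> 'h gen set" where
  "R_gens H f = GenE ` faces H f \<union> {GenT A B | A B. opposes H f A B}"

definition R_rels :: "'h set \<Rightarrow> ('h \<Rightarrow> real^'n) \<Rightarrow> (complex \<times> 'h gen list) list set" where
  "R_rels H f =
     {[(1, [GenE C, GenE C]), (-1, [GenE C])] | C. C \<in> faces H f}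
   \<union> {[(1, [GenE A, GenE C]), (-1, [GenE A, GenE B, GenE C])] | A B C.
        A \<in> faces H f \<and> B \<in> faces H f \<and> C \<in> faces H f \<and> collinear_faces H f A B C}
   \<union> {[(1, [GenE A, GenE B]), (-1, [GenE B])] | A B.
        A \<in> faces H f \<and> B \<in> faces H f \<and> face_le H f A B}
   \<union> {[(1, [GenE B, GenE A]), (-1, [GenE B])] | A B.
        A \<in> faces H f \<and> B \<in> faces H f \<and> face_le H f A B}
   \<union> {[(1, [GenE A, GenE B, GenE A, GenT A B]), (1, [GenT A B]), (-1, [GenE A, GenT A B]), (-1, [])]
        | A B. opposes H f A B}
   \<union> {[(1, [GenT A B, GenE A, GenE B, GenE A]), (1, [GenT A B]), (-1, [GenT A B, GenE A]), (-1, [])]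
        | A B. opposes H f A B}"

text \<open>A finite-dimensional module over e R e (e an idempotent generator) is a pair
  (n, \<psi>) where \<psi> assigns to each word w over the generators the n\<times>n complex matrix by
  which the class of e w e acts on complex^n.  The conditions say exactly that the
  linear extension of \<psi> is a unital algebra homomorphism e R e \<rightarrow> M_n(\<complex>):
  it factors through w \<mapsto> e w e, it kills the ideal of relations, it is multiplicative
  for the product (e u e)(e v e) = e u e v e, and e acts as the identity.\<close>

type_synonym 'g rep = "nat \<times> ('g list \<Rightarrow> complex mat)"

definition lin_eval :: "('g list \<Rightarrow> complex mat) \<Rightarrow> nat \<Rightarrow> (complex \<times> 'g list) list \<Rightarrow> complex mat" where
  "lin_eval \<psi> n r = foldr (\<lambda>(c, w) acc. c \<cdot>\<^sub>m \<psi> w + acc) r (0\<^sub>m n n)"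

definition corner_module :: "'g set \<Rightarrow> (complex \<times> 'g list) list set \<Rightarrow> 'g \<Rightarrow> 'g rep \<Rightarrow> bool" where
  "corner_module Gen Rels e X \<longleftrightarrow> (case X of (n, \<psi>) \<Rightarrow>
     (\<forall>w. \<psi> w \<in> carrier_mat n n) \<and>
     (\<forall>w. w \<notin> lists Gen \<longrightarrow> \<psi> w = 0\<^sub>m n n) \<and>
     (\<forall>w\<in>lists Gen. \<psi> w = \<psi> (e # w @ [e])) \<and>
     (\<forall>u\<in>lists Gen. \<forall>v\<in>lists Gen. \<psi> (u @ e # v) = \<psi> u * \<psi> v) \<and>
     \<psi> [e] = 1\<^sub>m n \<and>
     (\<forall>u\<in>lists Gen. \<forall>v\<in>lists Gen. \<forall>r\<in>Rels.
        lin_eval \<psi> n (map (\<lambda>(c, w). (c, u @ w @ v)) r) = 0\<^sub>m n n))"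

definition corner_hom :: "'g set \<Rightarrow> 'g rep \<Rightarrow> 'g rep \<Rightarrow> complex mat set" where
  "corner_hom Gen X Y = {T. T \<in> carrier_mat (fst Y) (fst X) \<and>
      (\<forall>w\<in>lists Gen. T * snd X w = snd Y w * T)}"

text \<open>A category here is given by a set of objects Ob and hom-sets Hom X Y of matrices,
  with composition matrix multiplication and identity 1_m (fst X).\<close>

definition is_functor ::
  "'a rep set \<Rightarrow> ('a rep \<Rightarrow> 'a rep \<Rightarrow> complex mat set) \<Rightarrow>
   'b rep set \<Rightarrow> ('b rep \<Rightarrow> 'b rep \<Rightarrow> complex mat set) \<Rightarrow>
   ('a rep \<Rightarrow> 'b rep) \<Rightarrow> ('a rep \<Rightarrow> 'a rep \<Rightarrow> complex mat \<Rightarrow> complex mat) \<Rightarrow> bool" where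
  "is_functor Ob1 Hom1 Ob2 Hom2 Fo Fm \<longleftrightarrow>
     (\<forall>X\<in>Ob1. Fo X \<in> Ob2) \<and>
     (\<forall>X\<in>Ob1. \<forall>Y\<in>Ob1. \<forall>g\<in>Hom1 X Y. Fm X Y g \<in> Hom2 (Fo X) (Fo Y)) \<and>
     (\<forall>X\<in>Ob1. Fm X X (1\<^sub>m (fst X)) = 1\<^sub>m (fst (Fo X))) \<and>
     (\<forall>X\<in>Ob1. \<forall>Y\<in>Ob1. \<forall>Z\<in>Ob1. \<forall>g\<in>Hom1 X Y. \<forall>h\<in>Hom1 Y Z.
        Fm X Z (h * g) = Fm Y Z h * Fm X Y g)"

definition is_iso :: "('b rep \<Rightarrow> 'b rep \<Rightarrow> complex mat set) \<Rightarrow> 'b rep \<Rightarrow> 'b rep \<Rightarrow> complex mat \<Rightarrow> bool" where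
  "is_iso Hom X Y g \<longleftrightarrow> g \<in> Hom X Y \<and>
     (\<exists>h\<in>Hom Y X. h * g = 1\<^sub>m (fst X) \<and> g * h = 1\<^sub>m (fst Y))"

definition is_nat_iso ::
  "'a rep set \<Rightarrow> ('a rep \<Rightarrow> 'a rep \<Rightarrow> complex mat set) \<Rightarrow> ('b rep \<Rightarrow> 'b rep \<Rightarrow> complex mat set) \<Rightarrow>
   ('a rep \<Rightarrow> 'b rep) \<Rightarrow> ('a rep \<Rightarrow> 'a rep \<Rightarrow> complex mat \<Rightarrow> complex mat) \<Rightarrow>
   ('a rep \<Rightarrow> 'b rep) \<Rightarrow> ('a rep \<Rightarrow> 'a rep \<Rightarrow> complex mat \<Rightarrow> complex mat) \<Rightarrow>
   ('a rep \<Rightarrow> complex mat) \<Rightarrow> bool" where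
  "is_nat_iso Ob1 Hom1 Hom2 Fo Fm Go Gm \<eta> \<longleftrightarrow>
     (\<forall>X\<in>Ob1. is_iso Hom2 (Fo X) (Go X) (\<eta> X)) \<and>
     (\<forall>X\<in>Ob1. \<forall>Y\<in>Ob1. \<forall>g\<in>Hom1 X Y. Gm X Y g * \<eta> X = \<eta> Y * Fm X Y g)"

definition cat_equivalent ::
  "'a rep set \<Rightarrow> ('a rep \<Rightarrow> 'a rep \<Rightarrow> complex mat set) \<Rightarrow>
   'b rep set \<Rightarrow> ('b rep \<Rightarrow> 'b rep \<Rightarrow> complex mat set) \<Rightarrow> bool" where
  "cat_equivalent Ob1 Hom1 Ob2 Hom2 \<longleftrightarrow>
     (\<exists>Fo Fm Go Gm \<eta> \<epsilon>.
        is_functor Ob1 Hom1 Ob2 Hom2 Fo Fm \<and>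
        is_functor Ob2 Hom2 Ob1 Hom1 Go Gm \<and>
        is_nat_iso Ob1 Hom1 Hom1 (\<lambda>X. X) (\<lambda>X Y g. g)
           (\<lambda>X. Go (Fo X)) (\<lambda>X Y g. Gm (Fo X) (Fo Y) (Fm X Y g)) \<eta> \<and>
        is_nat_iso Ob2 Hom2 Hom2 (\<lambda>X. Fo (Go X)) (\<lambda>X Y g. Fm (Go X) (Go Y) (Gm X Y g))
           (\<lambda>X. X) (\<lambda>X Y g. g) \<epsilon>)"

definition corner_mod_ob :: "'h set \<Rightarrow> ('h \<Rightarrow> real^'n) \<Rightarrow> ('h \<Rightarrow> real) \<Rightarrow> 'h gen rep set" where
  "corner_mod_ob H f A = {X. corner_module (R_gens H f) (R_rels H f) (GenE A) X}"

definition corner_mod_hom :: "'h set \<Rightarrow> ('h \<Rightarrow> real^'n) \<Rightarrow> 'h gen rep \<Rightarrow> 'h gen rep \<Rightarrow> complex mat set" where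
  "corner_mod_hom H f = corner_hom (R_gens H f)"

end

theory Submission
  imports Defs
begin

(* Opposing faces A, B give equivalent idempotents in the sense of Murray and von Neumann.
   Let t be the adjoined inverse of e_A e_B e_A + (1 - e_A); inside the corner at A its defining
   relations say e_A e_B e_A t = e_A = t e_A e_B e_A.  Then x = e_A e_B and y = e_B e_A t e_A
   satisfy x y = e_A and y x = e_B, the latter using the inverse adjoined for the pair (B, A).
   For equivalent idempotents r \<mapsto> x r y is an isomorphism e_B R e_B \<cong> e_A R e_A, so every
   e_A R e_A-module is an e_B R e_B-module on the same space, and this is an isomorphism of
   module categories.  Equivalence of idempotents is transitive, which handles chains. *)

definition respects_rels ::
  "'g set \<Rightarrow> (complex \<times> 'g list) list set \<Rightarrow> nat \<Rightarrow> ('g list \<Rightarrow> complex mat) \<Rightarrow> bool" where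
  "respects_rels G Rels n \<psi> \<longleftrightarrow> (\<forall>w. \<psi> w \<in> carrier_mat n n) \<and>
     (\<forall>u\<in>lists G. \<forall>v\<in>lists G. \<forall>r\<in>Rels.
        lin_eval \<psi> n (map (\<lambda>(c, w). (c, u @ w @ v)) r) = 0\<^sub>m n n)"

lemma corner_moduleD:
  assumes "corner_module G Rels e (n, \<psi>)"
  shows "\<psi> w \<in> carrier_mat n n"
    and "w \<notin> lists G \<Longrightarrow> \<psi> w = 0\<^sub>m n n"
    and "w \<in> lists G \<Longrightarrow> \<psi> (e # w @ [e]) = \<psi> w"
    and "u \<in> lists G \<Longrightarrow> v \<in> lists G \<Longrightarrow> \<psi> (u @ e # v) = \<psi> u * \<psi> v"
    and "\<psi> [e] = 1\<^sub>m n"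
    and "respects_rels G Rels n \<psi>"
  using assms unfolding corner_module_def respects_rels_def by simp_all

lemma index_lin_eval:
  assumes "\<forall>w. \<psi> w \<in> carrier_mat n n" "i < n" "j < n"
  shows "lin_eval \<psi> n r $$ (i, j) = (\<Sum>(c, w)\<leftarrow>r. c * \<psi> w $$ (i, j))"
proof -
  have dim: "dim_row (\<psi> w) = n" "dim_col (\<psi> w) = n" for w
    using assms(1) by auto
  have "lin_eval \<psi> n r \<in> carrier_mat n n \<and> lin_eval \<psi> n r $$ (i, j) = (\<Sum>(c, w)\<leftarrow>r. c * \<psi> w $$ (i, j))"
    using assms by (induction r) (auto simp: lin_eval_def dim)
  then show ?thesis by blast
qed

lemma lin_eval_map_cong:
  assumes "\<forall>(c, w)\<in>set r. \<phi> (g w) = \<psi> (h w)"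
  shows "lin_eval \<phi> n (map (\<lambda>(c, w). (c, g w)) r) = lin_eval \<psi> n (map (\<lambda>(c, w). (c, h w)) r)"
  using assms by (induction r) (auto simp: lin_eval_def)

lemma respects_rels_entry:
  assumes "respects_rels G Rels n \<psi>" "u \<in> lists G" "v \<in> lists G" "r \<in> Rels" "i < n" "j < n"
  shows "(\<Sum>(c, w)\<leftarrow>r. c * \<psi> (u @ w @ v) $$ (i, j)) = 0"
proof -
  have "lin_eval \<psi> n (map (\<lambda>(c, w). (c, u @ w @ v)) r) $$ (i, j) = 0"
    using assms unfolding respects_rels_def by simp
  then show ?thesis
    using assms index_lin_eval[of \<psi> n i j "map (\<lambda>(c, w). (c, u @ w @ v)) r"]
    unfolding respects_rels_def by (simp add: split_def comp_def)
qed

lemma respects_rels_eqI: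
  assumes "respects_rels G Rels n \<psi>" "\<And>i j. i < n \<Longrightarrow> j < n \<Longrightarrow> \<psi> x $$ (i, j) = \<psi> y $$ (i, j)"
  shows "\<psi> x = \<psi> y"
proof -
  have "\<psi> x \<in> carrier_mat n n" "\<psi> y \<in> carrier_mat n n"
    using assms(1) unfolding respects_rels_def by auto
  then show ?thesis using assms(2) by (intro eq_matI) auto
qed

(* Equality in R is only probed through finite-dimensional representations: two words are
   identified when they act equally, in every context, in every matrix representation of the
   relations.  This is all that the module categories can see. *)
definition word_eq :: "'g set \<Rightarrow> (complex \<times> 'g list) list set \<Rightarrow> 'g list \<Rightarrow> 'g list \<Rightarrow> bool" where
  "word_eq G Rels x y \<longleftrightarrow> (\<forall>n \<psi>. respects_rels G Rels n \<psi> \<longrightarrow>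
     (\<forall>u\<in>lists G. \<forall>v\<in>lists G. \<psi> (u @ x @ v) = \<psi> (u @ y @ v)))"

lemma word_eqD:
  "word_eq G Rels x y \<Longrightarrow> respects_rels G Rels n \<psi> \<Longrightarrow> u \<in> lists G \<Longrightarrow> v \<in> lists G \<Longrightarrow>
    \<psi> (u @ x @ v) = \<psi> (u @ y @ v)"
  unfolding word_eq_def by blast

lemma word_eq_sym: "word_eq G Rels x y \<Longrightarrow> word_eq G Rels y x"
  unfolding word_eq_def by metis

lemma word_eq_trans [trans]: "word_eq G Rels x y \<Longrightarrow> word_eq G Rels y z \<Longrightarrow> word_eq G Rels x z"
  unfolding word_eq_def by metis

lemma word_eq_append:
  assumes "word_eq G Rels x y" "p \<in> lists G" "q \<in> lists G"
  shows "word_eq G Rels (p @ x @ q) (p @ y @ q)"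
  unfolding word_eq_def
proof (intro allI impI ballI)
  fix n \<psi> u v assume "respects_rels G Rels n \<psi>" "u \<in> lists G" "v \<in> lists G"
  then show "\<psi> (u @ (p @ x @ q) @ v) = \<psi> (u @ (p @ y @ q) @ v)"
    using word_eqD[OF assms(1), of n \<psi> "u @ p" "q @ v"] assms(2,3) by simp
qed

lemma word_eq_if_binomial_rel:
  assumes "[(1, x), (-1, y)] \<in> Rels"
  shows "word_eq G Rels x y"
  unfolding word_eq_def
proof (intro allI impI ballI)
  fix n \<psi> u v assume \<psi>: "respects_rels G Rels n \<psi>" and "u \<in> lists G" "v \<in> lists G"
  show "\<psi> (u @ x @ v) = \<psi> (u @ y @ v)"
    by (rule respects_rels_eqI[OF \<psi>])
       (use respects_rels_entry[OF \<psi> \<open>u \<in> lists G\<close> \<open>v \<in> lists G\<close> assms] in simp)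
qed

(* x and y stand for elements of e R e' and e' R e with x y = e and y x = e'. *)
definition idems_equivalent_by ::
  "'g set \<Rightarrow> (complex \<times> 'g list) list set \<Rightarrow> 'g \<Rightarrow> 'g \<Rightarrow> 'g list \<Rightarrow> 'g list \<Rightarrow> bool" where
  "idems_equivalent_by G Rels e e' x y \<longleftrightarrow>
     e \<in> G \<and> e' \<in> G \<and> x \<in> lists G \<and> y \<in> lists G \<and>
     word_eq G Rels (e # x) x \<and> word_eq G Rels (x @ [e']) x \<and>
     word_eq G Rels (e' # y) y \<and> word_eq G Rels (y @ [e]) y \<and>
     word_eq G Rels (x @ y) [e] \<and> word_eq G Rels (y @ x) [e']"

definition idems_equivalent :: "'g set \<Rightarrow> (complex \<times> 'g list) list set \<Rightarrow> 'g \<Rightarrow> 'g \<Rightarrow> bool" where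
  "idems_equivalent G Rels e e' \<longleftrightarrow> (\<exists>x y. idems_equivalent_by G Rels e e' x y)"

lemma idems_equivalent_by_sym:
  "idems_equivalent_by G Rels e e' x y \<Longrightarrow> idems_equivalent_by G Rels e' e y x"
  unfolding idems_equivalent_by_def by blast

lemma idems_equivalent_by_trans:
  assumes "idems_equivalent_by G Rels e e' x y" "idems_equivalent_by G Rels e' e'' x' y'"
  shows "idems_equivalent_by G Rels e e'' (x @ x') (y' @ y)"
proof -
  have G: "x \<in> lists G" "y \<in> lists G" "x' \<in> lists G" "y' \<in> lists G" "e \<in> G" "e'' \<in> G"
    using assms unfolding idems_equivalent_by_def by auto
  have "word_eq G Rels ((x @ x') @ (y' @ y)) (x @ [e'] @ y)"
    using assms G word_eq_append[of G Rels "x' @ y'" "[e']" x y]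
    unfolding idems_equivalent_by_def by simp
  also have "word_eq G Rels \<dots> ([] @ x @ y)"
    using assms G word_eq_append[of G Rels "x @ [e']" x "[]" y]
    unfolding idems_equivalent_by_def by simp
  also have "word_eq G Rels \<dots> [e]"
    using assms unfolding idems_equivalent_by_def by simp
  finally have xy: "word_eq G Rels ((x @ x') @ (y' @ y)) [e]" .
  have "word_eq G Rels ((y' @ y) @ (x @ x')) (y' @ [e'] @ x')"
    using assms G word_eq_append[of G Rels "y @ x" "[e']" y' x']
    unfolding idems_equivalent_by_def by simp
  also have "word_eq G Rels \<dots> ([] @ y' @ x')"
    using assms G word_eq_append[of G Rels "y' @ [e']" y' "[]" x']
    unfolding idems_equivalent_by_def by simp
  also have "word_eq G Rels \<dots> [e'']"
    using assms unfolding idems_equivalent_by_def by simp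
  finally have yx: "word_eq G Rels ((y' @ y) @ (x @ x')) [e'']" .
  have "word_eq G Rels (e # x @ x') (x @ x')"
    using assms G word_eq_append[of G Rels "e # x" x "[]" x'] by (simp add: idems_equivalent_by_def)
  moreover have "word_eq G Rels (x @ x' @ [e'']) (x @ x')"
    using assms G word_eq_append[of G Rels "x' @ [e'']" x' x "[]"] by (simp add: idems_equivalent_by_def)
  moreover have "word_eq G Rels (e'' # y' @ y) (y' @ y)"
    using assms G word_eq_append[of G Rels "e'' # y'" y' "[]" y] by (simp add: idems_equivalent_by_def)
  moreover have "word_eq G Rels (y' @ y @ [e]) (y' @ y)"
    using assms G word_eq_append[of G Rels "y @ [e]" y y' "[]"] by (simp add: idems_equivalent_by_def)
  ultimately show ?thesis
    using xy yx G unfolding idems_equivalent_by_def by simp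
qed

lemma transp_idems_equivalent: "transp (idems_equivalent G Rels)"
  unfolding idems_equivalent_def by (auto intro!: transpI dest: idems_equivalent_by_trans)

definition conj_rep :: "'g set \<Rightarrow> 'g list \<Rightarrow> 'g list \<Rightarrow> 'g rep \<Rightarrow> 'g rep" where
  "conj_rep G x y X =
     (fst X, \<lambda>w. if w \<in> lists G then snd X (x @ w @ y) else 0\<^sub>m (fst X) (fst X))"

lemma respects_rels_conj:
  assumes "respects_rels G Rels n \<psi>" "x \<in> lists G" "y \<in> lists G"
    and rels: "\<forall>r\<in>Rels. \<forall>(c, w)\<in>set r. w \<in> lists G"
  shows "respects_rels G Rels n (\<lambda>w. if w \<in> lists G then \<psi> (x @ w @ y) else 0\<^sub>m n n)"
  unfolding respects_rels_def
proof (intro conjI allI ballI)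
  fix w show "(if w \<in> lists G then \<psi> (x @ w @ y) else 0\<^sub>m n n) \<in> carrier_mat n n"
    using assms(1) unfolding respects_rels_def by simp
next
  fix u v r assume uv: "u \<in> lists G" "v \<in> lists G" and r: "r \<in> Rels"
  have "\<forall>(c, w)\<in>set r. (if u @ w @ v \<in> lists G then \<psi> (x @ (u @ w @ v) @ y) else 0\<^sub>m n n)
          = \<psi> ((x @ u) @ w @ (v @ y))"
    using rels r uv by fastforce
  then have "lin_eval (\<lambda>w. if w \<in> lists G then \<psi> (x @ w @ y) else 0\<^sub>m n n) n
               (map (\<lambda>(c, w). (c, u @ w @ v)) r)
           = lin_eval \<psi> n (map (\<lambda>(c, w). (c, (x @ u) @ w @ (v @ y))) r)"
    by (rule lin_eval_map_cong)
  also have "\<dots> = 0\<^sub>m n n"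
  proof -
    have "x @ u \<in> lists G" "v @ y \<in> lists G" using assms(2,3) uv by auto
    then show ?thesis using assms(1) r unfolding respects_rels_def by blast
  qed
  finally show "lin_eval (\<lambda>w. if w \<in> lists G then \<psi> (x @ w @ y) else 0\<^sub>m n n) n
      (map (\<lambda>(c, w). (c, u @ w @ v)) r) = 0\<^sub>m n n" .
qed

lemma conj_corner_laws:
  assumes equiv: "idems_equivalent_by G Rels e e' x y"
    and M: "corner_module G Rels e (n, \<psi>)"
  shows "w \<in> lists G \<Longrightarrow> \<psi> (x @ (e' # w @ [e']) @ y) = \<psi> (x @ w @ y)"
    and "u \<in> lists G \<Longrightarrow> v \<in> lists G \<Longrightarrow>
      \<psi> (x @ (u @ e' # v) @ y) = \<psi> (x @ u @ y) * \<psi> (x @ v @ y)"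
    and "\<psi> (x @ [e'] @ y) = 1\<^sub>m n"
proof -
  note \<psi> = corner_moduleD(6)[OF M]
  have G: "e \<in> G" "e' \<in> G" "x \<in> lists G" "y \<in> lists G"
    and eqs: "word_eq G Rels (x @ [e']) x" "word_eq G Rels (e' # y) y"
      "word_eq G Rels (y @ [e]) y" "word_eq G Rels (x @ y) [e]" "word_eq G Rels (y @ x) [e']"
    using equiv unfolding idems_equivalent_by_def by auto
  show "\<psi> (x @ (e' # w @ [e']) @ y) = \<psi> (x @ w @ y)" if w: "w \<in> lists G"
  proof -
    have "\<psi> (x @ (e' # w @ [e']) @ y) = \<psi> ((x @ w) @ [e'] @ y)"
      using word_eqD[OF eqs(1) \<psi>, of "[]" "w @ e' # y"] G w by simp
    also have "\<dots> = \<psi> ((x @ w) @ y @ [])"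
      using word_eqD[OF eqs(2) \<psi>, of "x @ w" "[]"] G w by simp
    finally show ?thesis by simp
  qed
  show "\<psi> (x @ (u @ e' # v) @ y) = \<psi> (x @ u @ y) * \<psi> (x @ v @ y)"
    if uv: "u \<in> lists G" "v \<in> lists G"
  proof -
    have "\<psi> (x @ u @ y) * \<psi> (x @ v @ y) = \<psi> ((x @ u) @ (y @ [e]) @ (x @ v @ y))"
      using corner_moduleD(4)[OF M, of "x @ u @ y" "x @ v @ y"] G uv by simp
    also have "\<dots> = \<psi> ((x @ u) @ (y @ x) @ (v @ y))"
      using word_eqD[OF eqs(3) \<psi>, of "x @ u" "x @ v @ y"] G uv by simp
    also have "\<dots> = \<psi> ((x @ u) @ [e'] @ (v @ y))"
      using word_eqD[OF eqs(5) \<psi>, of "x @ u" "v @ y"] G uv by simp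
    finally show ?thesis by simp
  qed
  have "\<psi> (x @ [e'] @ y) = \<psi> ([] @ (x @ y) @ [])"
    using word_eqD[OF eqs(1) \<psi>, of "[]" y] G by simp
  also have "\<dots> = \<psi> [e]"
    using word_eqD[OF eqs(4) \<psi>, of "[]" "[]"] by simp
  finally show "\<psi> (x @ [e'] @ y) = 1\<^sub>m n"
    using corner_moduleD(5)[OF M] by simp
qed

lemma corner_module_conj_rep:
  assumes equiv: "idems_equivalent_by G Rels e e' x y"
    and rels: "\<forall>r\<in>Rels. \<forall>(c, w)\<in>set r. w \<in> lists G"
    and "corner_module G Rels e X"
  shows "corner_module G Rels e' (conj_rep G x y X)"
proof -
  obtain n \<psi> where X: "X = (n, \<psi>)" by fastforce
  have M: "corner_module G Rels e (n, \<psi>)" using assms(3) X by simp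
  have G: "e' \<in> G" "x \<in> lists G" "y \<in> lists G"
    using equiv unfolding idems_equivalent_by_def by auto
  define \<phi> where "\<phi> = (\<lambda>w. if w \<in> lists G then \<psi> (x @ w @ y) else 0\<^sub>m n n)"
  have conj: "conj_rep G x y X = (n, \<phi>)"
    by (simp add: X conj_rep_def \<phi>_def fun_eq_iff)
  have "\<phi> w = \<phi> (e' # w @ [e'])" if "w \<in> lists G" for w
    using conj_corner_laws(1)[OF equiv M that] that G by (simp add: \<phi>_def)
  moreover have "\<phi> (u @ e' # v) = \<phi> u * \<phi> v" if "u \<in> lists G" "v \<in> lists G" for u v
    using conj_corner_laws(2)[OF equiv M that] that G by (simp add: \<phi>_def)
  moreover have "\<phi> [e'] = 1\<^sub>m n"
    using conj_corner_laws(3)[OF equiv M] G by (simp add: \<phi>_def)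
  moreover have "respects_rels G Rels n \<phi>"
    unfolding \<phi>_def using respects_rels_conj[OF corner_moduleD(6)[OF M] G(2,3) rels] .
  moreover have "\<phi> w = 0\<^sub>m n n" if "w \<notin> lists G" for w
    using that by (simp add: \<phi>_def)
  ultimately show ?thesis
    unfolding conj corner_module_def respects_rels_def by simp
qed

lemma conj_rep_inverse:
  assumes equiv: "idems_equivalent_by G Rels e e' x y"
    and "corner_module G Rels e X"
  shows "conj_rep G y x (conj_rep G x y X) = X"
proof -
  obtain n \<psi> where X: "X = (n, \<psi>)" by fastforce
  have M: "corner_module G Rels e (n, \<psi>)" using assms(2) X by simp
  note \<psi> = corner_moduleD(6)[OF M]
  have G: "e \<in> G" "x \<in> lists G" "y \<in> lists G" and xy: "word_eq G Rels (x @ y) [e]"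
    using equiv unfolding idems_equivalent_by_def by auto
  have "\<psi> (x @ (y @ w @ x) @ y) = \<psi> w" if w: "w \<in> lists G" for w
  proof -
    have "\<psi> (x @ (y @ w @ x) @ y) = \<psi> ([] @ [e] @ (w @ x @ y))"
      using word_eqD[OF xy \<psi>, of "[]" "w @ x @ y"] G w by simp
    also have "\<dots> = \<psi> ((e # w) @ [e] @ [])"
      using word_eqD[OF xy \<psi>, of "e # w" "[]"] G w by simp
    also have "\<dots> = \<psi> w"
      using corner_moduleD(3)[OF M w] by simp
    finally show ?thesis .
  qed
  moreover have "\<psi> w = 0\<^sub>m n n" if "w \<notin> lists G" for w
    using corner_moduleD(2)[OF M that] .
  ultimately show ?thesis
    unfolding X conj_rep_def using G by (simp add: fun_eq_iff)
qed

lemma corner_hom_conj_rep: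
  assumes "x \<in> lists G" "y \<in> lists G" "T \<in> corner_hom G X Y"
  shows "T \<in> corner_hom G (conj_rep G x y X) (conj_rep G x y Y)"
  using assms unfolding corner_hom_def conj_rep_def by auto

lemma corner_hom_carrier: "T \<in> corner_hom G X Y \<Longrightarrow> T \<in> carrier_mat (fst Y) (fst X)"
  unfolding corner_hom_def by simp

lemma one_mat_corner_hom:
  assumes "corner_module G Rels e X"
  shows "1\<^sub>m (fst X) \<in> corner_hom G X X"
proof (cases X)
  case (Pair n \<psi>)
  have "1\<^sub>m n * \<psi> w = \<psi> w * 1\<^sub>m n" for w
  proof -
    have "\<psi> w \<in> carrier_mat n n"
      using corner_moduleD(1) assms Pair by simp
    then show ?thesis by (metis left_mult_one_mat right_mult_one_mat)
  qed
  then show ?thesis using Pair by (simp add: corner_hom_def)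
qed

lemma cat_equivalent_if_inverse_maps:
  assumes FG: "\<forall>X\<in>Ob1. Fo X \<in> Ob2 \<and> Go (Fo X) = X \<and> fst (Fo X) = fst X"
      "\<forall>Y\<in>Ob2. Go Y \<in> Ob1 \<and> Fo (Go Y) = Y"
    and hom: "\<And>X Y g. g \<in> Hom1 X Y \<Longrightarrow> g \<in> Hom2 (Fo X) (Fo Y)"
      "\<And>X Y g. g \<in> Hom2 X Y \<Longrightarrow> g \<in> Hom1 (Go X) (Go Y)"
    and one: "\<And>X. X \<in> Ob1 \<Longrightarrow> 1\<^sub>m (fst X) \<in> Hom1 X X"
      "\<And>Y. Y \<in> Ob2 \<Longrightarrow> 1\<^sub>m (fst Y) \<in> Hom2 Y Y"
    and car: "\<And>X Y g. g \<in> Hom1 X Y \<Longrightarrow> g \<in> carrier_mat (fst Y) (fst X)"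
      "\<And>X Y g. g \<in> Hom2 X Y \<Longrightarrow> g \<in> carrier_mat (fst Y) (fst X)"
  shows "cat_equivalent Ob1 Hom1 Ob2 Hom2"
proof -
  have fst_Go: "fst (Go Y) = fst Y" if "Y \<in> Ob2" for Y
    using FG that by metis
  have iso1: "is_iso Hom1 X X (1\<^sub>m (fst X))" if "X \<in> Ob1" for X
    using one(1)[OF that] unfolding is_iso_def by (auto intro!: bexI[of _ "1\<^sub>m (fst X)"])
  have iso2: "is_iso Hom2 Y Y (1\<^sub>m (fst Y))" if "Y \<in> Ob2" for Y
    using one(2)[OF that] unfolding is_iso_def by (auto intro!: bexI[of _ "1\<^sub>m (fst Y)"])
  have nat1: "g * 1\<^sub>m (fst X) = 1\<^sub>m (fst Y) * g" if "g \<in> Hom1 X Y" for X Y g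
    using car(1)[OF that] by (metis left_mult_one_mat right_mult_one_mat)
  have nat2: "g * 1\<^sub>m (fst X) = 1\<^sub>m (fst Y) * g" if "g \<in> Hom2 X Y" for X Y g
    using car(2)[OF that] by (metis left_mult_one_mat right_mult_one_mat)
  have "is_functor Ob1 Hom1 Ob2 Hom2 Fo (\<lambda>X Y g. g)"
    using FG unfolding is_functor_def by (auto intro: hom)
  moreover have "is_functor Ob2 Hom2 Ob1 Hom1 Go (\<lambda>X Y g. g)"
    using FG fst_Go unfolding is_functor_def by (auto intro: hom)
  moreover have "is_nat_iso Ob1 Hom1 Hom1 (\<lambda>X. X) (\<lambda>X Y g. g)
      (\<lambda>X. Go (Fo X)) (\<lambda>X Y g. g) (\<lambda>X. 1\<^sub>m (fst X))"
    using FG iso1 nat1 unfolding is_nat_iso_def by simp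
  moreover have "is_nat_iso Ob2 Hom2 Hom2 (\<lambda>X. Fo (Go X)) (\<lambda>X Y g. g)
      (\<lambda>X. X) (\<lambda>X Y g. g) (\<lambda>X. 1\<^sub>m (fst X))"
    using FG iso2 nat2 unfolding is_nat_iso_def by simp
  ultimately show ?thesis
    unfolding cat_equivalent_def by blast
qed

lemma idems_equivalent_cat_equivalent:
  assumes equiv: "idems_equivalent G Rels e e'"
    and rels: "\<forall>r\<in>Rels. \<forall>(c, w)\<in>set r. w \<in> lists G"
  shows "cat_equivalent {X. corner_module G Rels e X} (corner_hom G)
                        {X. corner_module G Rels e' X} (corner_hom G)"
proof -
  obtain x y where xy: "idems_equivalent_by G Rels e e' x y"
    using equiv unfolding idems_equivalent_def by blast
  then have yx: "idems_equivalent_by G Rels e' e y x"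
    by (rule idems_equivalent_by_sym)
  have G: "x \<in> lists G" "y \<in> lists G"
    using xy unfolding idems_equivalent_by_def by auto
  show ?thesis
  proof (rule cat_equivalent_if_inverse_maps[where Fo = "conj_rep G x y" and Go = "conj_rep G y x"])
    show "\<forall>X\<in>{X. corner_module G Rels e X}. conj_rep G x y X \<in> {X. corner_module G Rels e' X} \<and>
        conj_rep G y x (conj_rep G x y X) = X \<and> fst (conj_rep G x y X) = fst X"
      using corner_module_conj_rep[OF xy rels] conj_rep_inverse[OF xy]
      by (simp add: conj_rep_def)
    show "\<forall>Y\<in>{X. corner_module G Rels e' X}. conj_rep G y x Y \<in> {X. corner_module G Rels e X} \<and>
        conj_rep G x y (conj_rep G y x Y) = Y"
      using corner_module_conj_rep[OF yx rels] conj_rep_inverse[OF yx] by simp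
  qed (blast intro: corner_hom_conj_rep[OF G] corner_hom_conj_rep[OF G(2,1)]
      one_mat_corner_hom corner_hom_carrier)+
qed

lemma opposes_sym: "opposes H f A B \<Longrightarrow> opposes H f B A"
  unfolding opposes_def by (metis add.inverse_inverse)

lemma GenE_in_R_gens: "C \<in> faces H f \<Longrightarrow> GenE C \<in> R_gens H f"
  unfolding R_gens_def by blast

lemma opposes_gens:
  assumes "opposes H f A B"
  shows "GenE A \<in> R_gens H f" "GenE B \<in> R_gens H f" "GenT A B \<in> R_gens H f"
  using assms unfolding R_gens_def opposes_def by blast+

lemma R_rels_words: "\<forall>r\<in>R_rels H f. \<forall>(c, w)\<in>set r. w \<in> lists (R_gens H f)"
  unfolding R_rels_def using opposes_gens by (auto simp: GenE_in_R_gens)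

lemma word_eq_R_idem:
  "C \<in> faces H f \<Longrightarrow> word_eq (R_gens H f) (R_rels H f) [GenE C, GenE C] [GenE C]"
  by (rule word_eq_if_binomial_rel) (auto simp: R_rels_def)

lemma word_eq_R_right_inverse:
  assumes "opposes H f A B"
  shows "word_eq (R_gens H f) (R_rels H f) [GenE A, GenE B, GenE A, GenT A B] [GenE A]"
  unfolding word_eq_def
proof (intro allI impI ballI)
  let ?G = "R_gens H f" and ?a = "GenE A" and ?b = "GenE B" and ?t = "GenT A B"
  fix n \<psi> u v
  assume \<psi>: "respects_rels ?G (R_rels H f) n \<psi>" and u: "u \<in> lists ?G" and v: "v \<in> lists ?G"
  have gens: "?a \<in> ?G" "?b \<in> ?G" "?t \<in> ?G"
    using opposes_gens[OF assms] .
  have idem: "\<psi> (p @ ?a # ?a # q) = \<psi> (p @ ?a # q)" if "p \<in> lists ?G" "q \<in> lists ?G" for p q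
    using word_eqD[OF word_eq_R_idem \<psi> that] assms unfolding opposes_def by simp
  have rel: "[(1, [?a, ?b, ?a, ?t]), (1, [?t]), (-1, [?a, ?t]), (-1, [])] \<in> R_rels H f"
    using assms unfolding R_rels_def by blast
  show "\<psi> (u @ [?a, ?b, ?a, ?t] @ v) = \<psi> (u @ [?a] @ v)"
  proof (rule respects_rels_eqI[OF \<psi>])
    fix i j assume ij: "i < n" "j < n"
    \<comment> \<open>the defining relation of t, multiplied by e_A on the left\<close>
    have "\<psi> (u @ [?a, ?a] @ [?b, ?a, ?t] @ v) $$ (i, j) + \<psi> (u @ [?a, ?t] @ v) $$ (i, j)
        - \<psi> (u @ [?a, ?a] @ [?t] @ v) $$ (i, j) - \<psi> (u @ [?a] @ v) $$ (i, j) = 0"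
      using respects_rels_entry[OF \<psi> _ v rel ij, of "u @ [?a]"] u gens
      by (simp add: algebra_simps)
    then show "\<psi> (u @ [?a, ?b, ?a, ?t] @ v) $$ (i, j) = \<psi> (u @ [?a] @ v) $$ (i, j)"
      using u v gens by (simp add: idem)
  qed
qed

lemma word_eq_R_left_inverse:
  assumes "opposes H f A B"
  shows "word_eq (R_gens H f) (R_rels H f) [GenT A B, GenE A, GenE B, GenE A] [GenE A]"
  unfolding word_eq_def
proof (intro allI impI ballI)
  let ?G = "R_gens H f" and ?a = "GenE A" and ?b = "GenE B" and ?t = "GenT A B"
  fix n \<psi> u v
  assume \<psi>: "respects_rels ?G (R_rels H f) n \<psi>" and u: "u \<in> lists ?G" and v: "v \<in> lists ?G"
  have gens: "?a \<in> ?G" "?b \<in> ?G" "?t \<in> ?G"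
    using opposes_gens[OF assms] .
  have idem: "\<psi> (p @ ?a # ?a # q) = \<psi> (p @ ?a # q)" if "p \<in> lists ?G" "q \<in> lists ?G" for p q
    using word_eqD[OF word_eq_R_idem \<psi> that] assms unfolding opposes_def by simp
  have rel: "[(1, [?t, ?a, ?b, ?a]), (1, [?t]), (-1, [?t, ?a]), (-1, [])] \<in> R_rels H f"
    using assms unfolding R_rels_def by blast
  show "\<psi> (u @ [?t, ?a, ?b, ?a] @ v) = \<psi> (u @ [?a] @ v)"
  proof (rule respects_rels_eqI[OF \<psi>])
    fix i j assume ij: "i < n" "j < n"
    \<comment> \<open>the defining relation of t, multiplied by e_A on the right\<close>
    have "\<psi> (u @ [?t, ?a, ?b] @ ?a # ?a # v) $$ (i, j) + \<psi> (u @ [?t, ?a] @ v) $$ (i, j)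
        - \<psi> (u @ [?t] @ ?a # ?a # v) $$ (i, j) - \<psi> (u @ [?a] @ v) $$ (i, j) = 0"
      using respects_rels_entry[OF \<psi> u _ rel ij, of "?a # v"] v gens
      by (simp add: algebra_simps)
    then show "\<psi> (u @ [?t, ?a, ?b, ?a] @ v) $$ (i, j) = \<psi> (u @ [?a] @ v) $$ (i, j)"
      using idem[of "u @ [?t, ?a, ?b]" v] idem[of "u @ [?t]" v] u v gens by simp
  qed
qed

lemma word_eq_R_conj:
  assumes "opposes H f A B"
  shows "word_eq (R_gens H f) (R_rels H f) [GenE B, GenE A, GenT A B, GenE A, GenE B] [GenE B]"
proof -
  let ?G = "R_gens H f" and ?Rels = "R_rels H f"
  let ?a = "GenE A" and ?b = "GenE B" and ?t = "GenT A B" and ?t' = "GenT B A"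
  have "opposes H f B A" using assms by (rule opposes_sym)
  have gens: "?a \<in> ?G" "?b \<in> ?G" "?t \<in> ?G" "?t' \<in> ?G"
    using opposes_gens[OF assms] opposes_gens[OF \<open>opposes H f B A\<close>] by auto
  have inv': "word_eq ?G ?Rels [?t', ?b, ?a, ?b] [?b]"
    using word_eq_R_left_inverse[OF \<open>opposes H f B A\<close>] .
  have "word_eq ?G ?Rels ([] @ [?b] @ [?a, ?t, ?a, ?b]) ([] @ [?t', ?b, ?a, ?b] @ [?a, ?t, ?a, ?b])"
    using word_eq_append[OF word_eq_sym[OF inv'], of "[]" "[?a, ?t, ?a, ?b]"] gens by simp
  also have "[] @ [?t', ?b, ?a, ?b] @ [?a, ?t, ?a, ?b] = [?t', ?b] @ [?a, ?b, ?a, ?t] @ [?a, ?b]"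
    by simp
  also have "word_eq ?G ?Rels \<dots> ([?t', ?b] @ [?a] @ [?a, ?b])"
    using word_eq_append[OF word_eq_R_right_inverse[OF assms], of "[?t', ?b]" "[?a, ?b]"] gens
    by simp
  also have "[?t', ?b] @ [?a] @ [?a, ?b] = [?t', ?b] @ [?a, ?a] @ [?b]"
    by simp
  also have "word_eq ?G ?Rels \<dots> ([?t', ?b] @ [?a] @ [?b])"
    using word_eq_append[OF word_eq_R_idem, of A H f "[?t', ?b]" "[?b]"] assms gens
    unfolding opposes_def by simp
  also have "[?t', ?b] @ [?a] @ [?b] = [?t', ?b, ?a, ?b]"
    by simp
  also have "word_eq ?G ?Rels \<dots> [?b]"
    using inv' .
  finally show ?thesis by simp
qed

lemma opposes_idems_equivalent_by:
  assumes "opposes H f A B"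
  shows "idems_equivalent_by (R_gens H f) (R_rels H f) (GenE A) (GenE B)
           [GenE A, GenE B] [GenE B, GenE A, GenT A B, GenE A]"
proof -
  let ?G = "R_gens H f" and ?Rels = "R_rels H f"
  let ?a = "GenE A" and ?b = "GenE B" and ?t = "GenT A B"
  have gens: "?a \<in> ?G" "?b \<in> ?G" "?t \<in> ?G"
    using opposes_gens[OF assms] .
  have idem_a: "word_eq ?G ?Rels (p @ [?a, ?a] @ q) (p @ [?a] @ q)"
    and idem_b: "word_eq ?G ?Rels (p @ [?b, ?b] @ q) (p @ [?b] @ q)"
    if "p \<in> lists ?G" "q \<in> lists ?G" for p q
    using word_eq_append[OF word_eq_R_idem that] assms unfolding opposes_def by auto
  have "word_eq ?G ?Rels ([?a] @ [?b, ?b] @ [?a, ?t, ?a]) ([?a] @ [?b] @ [?a, ?t, ?a])"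
    using idem_b[of "[?a]" "[?a, ?t, ?a]"] gens by simp
  also have "[?a] @ [?b] @ [?a, ?t, ?a] = [] @ [?a, ?b, ?a, ?t] @ [?a]"
    by simp
  also have "word_eq ?G ?Rels \<dots> ([] @ [?a] @ [?a])"
    using word_eq_append[OF word_eq_R_right_inverse[OF assms], of "[]" "[?a]"] gens by simp
  also have "word_eq ?G ?Rels \<dots> ([] @ [?a] @ [])"
    using idem_a[of "[]" "[]"] by simp
  finally have xy: "word_eq ?G ?Rels ([?a, ?b] @ [?b, ?a, ?t, ?a]) [?a]"
    by simp
  have "word_eq ?G ?Rels ([?b, ?a, ?t] @ [?a, ?a] @ [?b]) ([?b, ?a, ?t] @ [?a] @ [?b])"
    using idem_a[of "[?b, ?a, ?t]" "[?b]"] gens by simp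
  also have "[?b, ?a, ?t] @ [?a] @ [?b] = [?b, ?a, ?t, ?a, ?b]"
    by simp
  also have "word_eq ?G ?Rels \<dots> [?b]"
    using word_eq_R_conj[OF assms] .
  finally have yx: "word_eq ?G ?Rels ([?b, ?a, ?t, ?a] @ [?a, ?b]) [?b]"
    by simp
  show ?thesis
    unfolding idems_equivalent_by_def
    using xy yx gens idem_a[of "[]" "[?b]"] idem_b[of "[?a]" "[]"] idem_b[of "[]" "[?a, ?t, ?a]"]
      idem_a[of "[?b, ?a, ?t]" "[]"]
    by simp
qed

theorem corollary4p2:
  fixes H :: "'h set" and f :: "'h \<Rightarrow> real^'n"
    and A B :: "'h \<Rightarrow> real" and Fs :: "('h \<Rightarrow> real) list"
  assumes "finite H"
    and "\<forall>h\<in>H. f h \<noteq> 0"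
    and "\<forall>h\<in>H. \<forall>h'\<in>H. h \<noteq> h' \<longrightarrow> {x. f h \<bullet> x = 0} \<noteq> {x. f h' \<bullet> x = 0}"
    and "\<forall>F\<in>set (A # Fs @ [B]). F \<in> faces H f"
    and "\<forall>F\<in>set (A # Fs @ [B]). face_dim H f F = face_dim H f A"
    and "\<forall>i < Suc (length Fs). opposes H f ((A # Fs @ [B]) ! i) ((A # Fs @ [B]) ! Suc i)"
  shows "cat_equivalent (corner_mod_ob H f A) (corner_mod_hom H f)
                        (corner_mod_ob H f B) (corner_mod_hom H f)"
proof -
  let ?equiv = "idems_equivalent (R_gens H f) (R_rels H f)"
  have "successively (opposes H f) (A # Fs @ [B])"
    using assms(6) by (simp add: successively_conv_nth)
  then have "successively ?equiv (map GenE (A # Fs @ [B]))"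
    unfolding successively_map
    by (rule successively_mono) (auto simp: idems_equivalent_def dest: opposes_idems_equivalent_by)
  then have "sorted_wrt ?equiv (map GenE (A # Fs @ [B]))"
    using successively_conv_sorted_wrt[OF transp_idems_equivalent] by blast
  then have "?equiv (GenE A) (GenE B)"
    by simp
  then show ?thesis
    unfolding corner_mod_ob_def corner_mod_hom_def
    by (rule idems_equivalent_cat_equivalent[OF _ R_rels_words])
qed

end
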